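(* Assume the setting described in the context. For every function $\phi:V\times\mathcal S_{T_0}\to\mathbb R$ of class $C^1$ in time and every continuous $F:E\times\mathcal S_{T_0}\to\mathbb R$, the functional $I_{\phi,F}:\mathcal M_*\to[0,+\infty]$... more precisely $I_{\phi,F}:\mathcal M_*\to\mathbb R\cup\{+\infty\}$ defined in the context is convex and lower semicontinuous.
   Context: Let $V$ be a finite set, $T_0>0$, $\mathcal S_{T_0}=\mathbb R/T_0\mathbb Z$. For $y,z\in V$, $r(y,z;\cdot)\ge0$ is measurable, $T_0$-periodic, $r(x,x;\cdot)=0$; $E$ is the set of $(y,z)$, $y\ne z$, with $r(y,z;t)>0$ for all $t>0$. Assume (A1) if $r(y,z;t)>0$ for some $t>0$ then for all $t>0$; (A2) $(V,E)$ strongly connected; (A3) $\max_E\sup_{t\in[0,T_0]}r<\infty$, $\min_E\inf_{t\in[0,T_0]}r>0$; (A4) the set of discontinuity points in $\mathcal S_{T_0}$ of the maps $t\mapsto r(y,z;t)$, $y,z\in V$, has Lebesgue measure zero. $\mathcal M_*=\mathcal M_{+,T_0}(V\times\mathcal S_{T_0})\times\mathcal M_+(E\times\mathcal S_{T_0})$ (nonnegative measures of total mass $T_0$, resp. finite nonnegative measures) with the weak topology. Set $r(y;t)=\sum_zr(y,z;t)$, $r^F(y,z;t)=r(y,z;t)e^{F(y,z;t)}$, $r^F(y;t)=\sum_zr^F(y,z;t)$. For a finite measure $Q$ on $E\times\mathcal S_{T_0}$, $\mathrm{div}\,Q(\phi)=\sum_y\int\phi(y,s)[\sum_zQ(y,z,ds)-\sum_zQ(z,y,ds)]$.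 Define $\hat I_{\phi,F}(\mu,Q)=-\mu(\partial_t\phi)+\mathrm{div}\,Q(\phi)+Q(F)-\mu(r^F-r)$, where $\mu(h)=\sum_y\int h(y,t)\mu(y,dt)$ and $Q(F)=\sum_{(y,z)}\int F(y,z,t)Q(y,z,dt)$; and $I_{\phi,F}(\mu,Q)=\hat I_{\phi,F}(\mu,Q)$ if $\mu=\mu_tdt$ with $\mu_t(V)=1$ for a.e. $t$, and $I_{\phi,F}(\mu,Q)=+\infty$ otherwise. *)

theory Defs
  imports "HOL-Probability.Probability"
begin

text \<open>The time circle S_T0 = R/T0Z is represented by the real line with
  T0-periodic functions; measures on S_T0 are represented by finite Borel measures on the
  real line concentrated on the fundamental domain [0,T0). Test functions for the weak
  topology are continuous T0-periodic functions (= continuous functions on the circle).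
  The finite vertex set V is the finite type 'v (V = UNIV). A measure on V x S_T0 is a
  family mu :: 'v => real measure (mu y = mu(y,dt)); a measure on E x S_T0 is a family
  Q :: 'v * 'v => real measure with Q e the zero measure for e not in E.\<close>

definition periodic_fun :: "real \<Rightarrow> (real \<Rightarrow> 'b) \<Rightarrow> bool" where
  "periodic_fun T f \<longleftrightarrow> (\<forall>t. f (t + T) = f t)"

definition circ_meas :: "real \<Rightarrow> real measure \<Rightarrow> bool" where
  "circ_meas T m \<longleftrightarrow> sets m = sets borel \<and> finite_measure m \<and> emeasure m (- {0..<T}) = 0"

definition edges :: "('v \<Rightarrow> 'v \<Rightarrow> real \<Rightarrow> real) \<Rightarrow> ('v \<times> 'v) set" where
  "edges r = {(y, z). y \<noteq> z \<and> (\<forall>t>0. r y z t > 0)}"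

definition Mstar :: "real \<Rightarrow> ('v \<times> 'v) set \<Rightarrow>
    (('v::finite \<Rightarrow> real measure) \<times> ('v \<times> 'v \<Rightarrow> real measure)) set" where
  "Mstar T E = {(\<mu>, Q).
      (\<forall>y. circ_meas T (\<mu> y)) \<and> (\<Sum>y\<in>UNIV. measure (\<mu> y) UNIV) = T \<and>
      (\<forall>e. circ_meas T (Q e)) \<and> (\<forall>e. e \<notin> E \<longrightarrow> Q e = null_measure borel)}"

text \<open>Weak topology on M_*: generated by the maps p |-> integral of continuous
  (periodic) test functions against each component; this is the product of the weak
  topologies on the two factors (V and E are finite and discrete).\<close>
definition weak_top :: "real \<Rightarrow> ('v \<times> 'v) set \<Rightarrow>
    (('v::finite \<Rightarrow> real measure) \<times> ('v \<times> 'v \<Rightarrow> real measure)) topology" where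
  "weak_top T E = topology_generated_by
     ({ {p \<in> Mstar T E. (\<integral>t. (f::real\<Rightarrow>real) t \<partial>(fst p y)) \<in> (U::real set)} | y f U.
          open U \<and> continuous_on UNIV f \<and> periodic_fun T f } \<union>
      { {p \<in> Mstar T E. (\<integral>t. (f::real\<Rightarrow>real) t \<partial>(snd p e)) \<in> (U::real set)} | e f U.
          open U \<and> continuous_on UNIV f \<and> periodic_fun T f })"

definition convex_comb_meas :: "real \<Rightarrow> real measure \<Rightarrow> real measure \<Rightarrow> real measure \<Rightarrow> bool" where
  "convex_comb_meas lam m1 m2 w \<longleftrightarrow> sets w = sets borel \<and>
     (\<forall>A\<in>sets borel. emeasure w A = ennreal lam * emeasure m1 A + ennreal (1 - lam) * emeasure m2 A)"

definition convex_comb_pair :: "real \<Rightarrow> (('v \<Rightarrow> real measure) \<times> ('w \<Rightarrow> real measure))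
    \<Rightarrow> (('v \<Rightarrow> real measure) \<times> ('w \<Rightarrow> real measure))
    \<Rightarrow> (('v \<Rightarrow> real measure) \<times> ('w \<Rightarrow> real measure)) \<Rightarrow> bool" where
  "convex_comb_pair lam p q w \<longleftrightarrow>
     (\<forall>y. convex_comb_meas lam (fst p y) (fst q y) (fst w y)) \<and>
     (\<forall>e. convex_comb_meas lam (snd p e) (snd q e) (snd w e))"

text \<open>hat I_{phi,F}(mu,Q) = -mu(d_t phi) + div Q(phi) + Q(F) - mu(r^F - r).\<close>
definition Ihat :: "real \<Rightarrow> ('v::finite \<Rightarrow> 'v \<Rightarrow> real \<Rightarrow> real) \<Rightarrow> ('v \<Rightarrow> real \<Rightarrow> real)
    \<Rightarrow> ('v \<Rightarrow> 'v \<Rightarrow> real \<Rightarrow> real) \<Rightarrow> ('v \<Rightarrow> real measure) \<Rightarrow> ('v \<times> 'v \<Rightarrow> real measure) \<Rightarrow> real" where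
  "Ihat T r \<phi> F \<mu> Q =
     - (\<Sum>y\<in>UNIV. \<integral>t. deriv (\<phi> y) t \<partial>(\<mu> y))
     + (\<Sum>y\<in>UNIV. \<Sum>z\<in>UNIV. (\<integral>s. \<phi> y s \<partial>(Q (y, z))) - (\<integral>s. \<phi> y s \<partial>(Q (z, y))))
     + (\<Sum>(y, z)\<in>edges r. \<integral>t. F y z t \<partial>(Q (y, z)))
     - (\<Sum>y\<in>UNIV. \<integral>t. (\<Sum>z\<in>UNIV. r y z t * exp (F y z t)) - (\<Sum>z\<in>UNIV. r y z t) \<partial>(\<mu> y))"

definition time_abs_cont :: "real \<Rightarrow> ('v::finite \<Rightarrow> real measure) \<Rightarrow> bool" where
  "time_abs_cont T \<mu> \<longleftrightarrow> (\<exists>m :: 'v \<Rightarrow> real \<Rightarrow> ennreal.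
      (\<forall>y. m y \<in> borel_measurable borel \<and> \<mu> y = density lborel (m y)) \<and>
      (AE t in lborel. 0 \<le> t \<and> t < T \<longrightarrow> (\<Sum>y\<in>UNIV. m y t) = 1))"

definition Ifun :: "real \<Rightarrow> ('v::finite \<Rightarrow> 'v \<Rightarrow> real \<Rightarrow> real) \<Rightarrow> ('v \<Rightarrow> real \<Rightarrow> real)
    \<Rightarrow> ('v \<Rightarrow> 'v \<Rightarrow> real \<Rightarrow> real) \<Rightarrow> ('v \<Rightarrow> real measure) \<times> ('v \<times> 'v \<Rightarrow> real measure) \<Rightarrow> ereal" where
  "Ifun T r \<phi> F p =
     (if time_abs_cont T (fst p) then ereal (Ihat T r \<phi> F (fst p) (snd p)) else \<infinity>)"

end

theory Submission
  imports Defs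
begin

(* Split I = Ilin - Irate: Ilin integrates continuous periodic test functions against the
   components of (mu, Q), so it is affine and weakly continuous; Irate(mu) = sum_y mu_y(r^F(y) - r(y))
   is affine in mu, but its integrand is merely bounded and continuous almost everywhere.
   Convexity then only needs that "mu = mu_t dt with mu_t(V) = 1" is preserved by convex
   combinations (otherwise the right-hand side is +infinity).
   For lower semicontinuity, that constraint says sum_y mu_y = dt on [0,T0), which can be tested
   against continuous periodic cutoffs of the indicators of [0,a]; hence it fails on a weakly open
   set. Where it holds, mu_y <= dt, so replacing the rate integrand by continuous periodic
   majorants h_y (Lipschitz sup-envelopes) that are close to it in L^1(dt) yields a weakly
   continuous lower bound Ilin - sum_y mu_y(h_y) of I which is nearly attained at the point. *)

lemma periodic_fun_add_int:
  assumes "periodic_fun T f" shows "f (t + real_of_int k * T) = f t"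
proof (induction k rule: int_induct[where k = 0])
  case (step1 i)
  then show ?case using assms unfolding periodic_fun_def by (metis add.assoc distrib_right mult_1 of_int_add of_int_1)
next
  case (step2 i)
  then show ?case using assms unfolding periodic_fun_def by (metis diff_add_cancel add.assoc distrib_right mult_1 of_int_add of_int_1)
qed simp

lemma ex_shift_into_period:
  assumes "(T::real) > 0" obtains k :: int where "t + real_of_int k * T \<in> {0..<T}"
proof
  have "real_of_int \<lfloor>t / T\<rfloor> * T \<le> t" "t < (real_of_int \<lfloor>t / T\<rfloor> + 1) * T"
    using assms by (simp_all add: floor_divide_lower floor_divide_upper)
  then show "t + real_of_int (- \<lfloor>t / T\<rfloor>) * T \<in> {0..<T}" by (auto simp: algebra_simps)
qed

lemma periodic_fun_range:
  assumes "T > 0" "periodic_fun T f" shows "range f = f ` {0..<T}"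
proof -
  have "f t \<in> f ` {0..<T}" for t
  proof -
    obtain k :: int where "t + real_of_int k * T \<in> {0..<T}" using ex_shift_into_period[OF assms(1)] .
    then show ?thesis using periodic_fun_add_int[OF assms(2), of t k] by (metis image_eqI)
  qed
  then show ?thesis by auto
qed

lemma bounded_range_continuous_periodic:
  fixes f :: "real \<Rightarrow> 'a::metric_space"
  assumes "T > 0" "periodic_fun T f" "continuous_on UNIV f"
  shows "bounded (range f)"
proof -
  have "bounded (f ` {0..T})"
    by (intro compact_imp_bounded compact_continuous_image continuous_on_subset[OF assms(3)]) auto
  then show ?thesis
    unfolding periodic_fun_range[OF assms(1,2)] by (rule bounded_subset) auto
qed

lemma bounded_range_mult:
  fixes f g :: "'a \<Rightarrow> real"
  assumes "bounded (range f)" "bounded (range g)"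
  shows "bounded (range (\<lambda>t. f t * g t))"
proof -
  obtain B C where "\<And>t. \<bar>f t\<bar> \<le> B" "\<And>t. \<bar>g t\<bar> \<le> C" using assms unfolding bounded_iff by auto
  then have "\<bar>f t * g t\<bar> \<le> B * C" for t by (simp add: abs_mult mult_mono')
  then show ?thesis unfolding bounded_iff by auto
qed

lemma bounded_range_sum:
  fixes f :: "'i \<Rightarrow> 'a \<Rightarrow> real"
  assumes "finite I" "\<And>i. i \<in> I \<Longrightarrow> bounded (range (f i))"
  shows "bounded (range (\<lambda>t. \<Sum>i\<in>I. f i t))"
  using assms by (induction I rule: finite_induct) (auto intro: bounded_plus_comp)

lemma circ_meas_sets: "circ_meas T m \<Longrightarrow> sets m = sets borel"
  by (simp add: circ_meas_def)

lemma circ_meas_space: "circ_meas T m \<Longrightarrow> space m = UNIV"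
  by (metis circ_meas_sets sets_eq_imp_space_eq space_borel)

lemma circ_meas_finite: "circ_meas T m \<Longrightarrow> finite_measure m"
  by (simp add: circ_meas_def)

lemma borel_measurable_sets_borel:
  "sets M = sets borel \<Longrightarrow> f \<in> borel_measurable borel \<Longrightarrow> f \<in> borel_measurable M"
  using measurable_cong_sets[OF _ refl] by blast

lemma measurable_circ_meas: "circ_meas T m \<Longrightarrow> f \<in> borel_measurable borel \<Longrightarrow> f \<in> borel_measurable m"
  by (rule borel_measurable_sets_borel[OF circ_meas_sets])

lemma AE_circ_meas: assumes "circ_meas T m" shows "AE t in m. t \<in> {0..<T}"
proof (rule AE_I')
  show "- {0..<T} \<in> null_sets m" using assms unfolding circ_meas_def by (simp add: null_sets_def)
qed auto

lemma integrable_circ_meas: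
  fixes f :: "real \<Rightarrow> real"
  assumes m: "circ_meas T m" and f: "f \<in> borel_measurable borel" "bounded (range f)"
  shows "integrable m f"
proof -
  interpret finite_measure m using circ_meas_finite[OF m] .
  obtain B where B: "\<And>t. norm (f t) \<le> B" using f(2) unfolding bounded_iff by blast
  show ?thesis
  proof (rule integrable_const_bound[where B = B])
    show "AE x in m. norm (f x) \<le> B" using B by simp
  qed (rule measurable_circ_meas[OF m f(1)])
qed

definition lborel_period :: "real \<Rightarrow> real measure" where
  "lborel_period T = density lborel (indicator {0..<T})"

lemma sets_lborel_period [simp]: "sets (lborel_period T) = sets borel"
  by (simp add: lborel_period_def)

lemma lborel_period_density: "lborel_period T = density lborel (\<lambda>t. ennreal (indicator {0..<T} t))"
  unfolding lborel_period_def by (simp add: ennreal_indicator)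

lemma emeasure_lborel_period:
  assumes "A \<in> sets borel" shows "emeasure (lborel_period T) A = emeasure lborel (A \<inter> {0..<T})"
proof -
  have "emeasure (lborel_period T) A = (\<integral>\<^sup>+ x. indicator {0..<T} x * indicator A x \<partial>lborel)"
    unfolding lborel_period_def using assms by (simp add: emeasure_density)
  also have "\<dots> = (\<integral>\<^sup>+ x. indicator (A \<inter> {0..<T}) x \<partial>lborel)"
    by (intro nn_integral_cong) (simp split: split_indicator)
  finally show ?thesis using assms by simp
qed

lemma circ_meas_lborel_period: assumes "T > 0" shows "circ_meas T (lborel_period T)"
proof -
  have "emeasure (lborel_period T) UNIV = ennreal T" using emeasure_lborel_period[of UNIV T] assms by simp
  then have "finite_measure (lborel_period T)"
    by (intro finite_measureI) (simp add: lborel_period_def)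
  moreover have "emeasure (lborel_period T) (- {0..<T}) = 0"
    using emeasure_lborel_period[of "- {0..<T}" T] by simp
  ultimately show ?thesis unfolding circ_meas_def by simp
qed

lemma measure_lborel_period_UNIV: "T > 0 \<Longrightarrow> measure (lborel_period T) UNIV = T"
  using emeasure_lborel_period[of UNIV T] by (simp add: measure_def)

lemma time_abs_cont_real_densities:
  fixes \<mu> :: "'v::finite \<Rightarrow> real measure"
  assumes c: "\<And>y. circ_meas T (\<mu> y)" and tac: "time_abs_cont T \<mu>"
  obtains d where "\<And>y. d y \<in> borel_measurable borel" "\<And>y t. 0 \<le> d y t"
    "\<And>y. \<mu> y = density lborel (\<lambda>t. ennreal (d y t))"
    "AE t in lborel. (\<Sum>y\<in>UNIV. d y t) = indicator {0..<T} t"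
proof -
  obtain m where m: "\<And>y. m y \<in> borel_measurable borel" "\<And>y. \<mu> y = density lborel (m y)"
    and ae1: "AE t in lborel. 0 \<le> t \<and> t < T \<longrightarrow> (\<Sum>y\<in>UNIV. m y t) = 1"
    using tac unfolding time_abs_cont_def by blast
  have "AE t in lborel. t \<notin> {0..<T} \<longrightarrow> m y t = 0" for y
  proof -
    have "(\<integral>\<^sup>+ t. m y t * indicator (- {0..<T}) t \<partial>lborel) = 0"
      using c[of y] m by (simp add: circ_meas_def emeasure_density)
    then have "AE t in lborel. m y t * indicator (- {0..<T}) t = 0"
      using m by (subst (asm) nn_integral_0_iff_AE) auto
    then show ?thesis by eventually_elim (auto split: split_indicator)
  qed
  then have "AE t in lborel. \<forall>y\<in>UNIV. t \<notin> {0..<T} \<longrightarrow> m y t = 0"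
    by (intro AE_finite_allI) auto
  then have sum_m: "AE t in lborel. (\<Sum>y\<in>UNIV. m y t) = indicator {0..<T} t"
    using ae1 by eventually_elim (auto split: split_indicator)
  then have fin: "AE t in lborel. \<forall>y. m y t < \<top>"
  proof eventually_elim
    case (elim t)
    have "m y t \<le> 1" for y
      using member_le_sum[of y UNIV "\<lambda>y. m y t"] elim by (auto split: split_indicator split_indicator_asm)
    then show ?case using ennreal_one_less_top le_less_trans by blast
  qed
  define d where "d y t = enn2real (m y t)" for y t
  show ?thesis
  proof
    show "d y \<in> borel_measurable borel" for y unfolding d_def using m(1) by measurable
    show "0 \<le> d y t" for y t by (simp add: d_def)
    show "\<mu> y = density lborel (\<lambda>t. ennreal (d y t))" for y
      unfolding m(2) d_def using m(1) fin
      by (intro density_cong) (auto elim!: eventually_mono simp: less_top)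
    show "AE t in lborel. (\<Sum>y\<in>UNIV. d y t) = indicator {0..<T} t"
      using sum_m fin
    proof eventually_elim
      case (elim t)
      then have "(\<Sum>y\<in>UNIV. d y t) = enn2real (\<Sum>y\<in>UNIV. m y t)"
        unfolding d_def using elim(2) by (subst enn2real_sum) (auto simp: comp_def)
      with elim show ?case by (simp split: split_indicator)
    qed
  qed
qed

lemma time_abs_contI:
  fixes \<mu> :: "'v::finite \<Rightarrow> real measure"
  assumes d: "\<And>y. d y \<in> borel_measurable borel" "\<And>y t. 0 \<le> d y t"
    "\<And>y. \<mu> y = density lborel (\<lambda>t. ennreal (d y t))"
    and sum: "AE t in lborel. (\<Sum>y\<in>UNIV. d y t) = indicator {0..<T} t"
  shows "time_abs_cont T \<mu>"
  unfolding time_abs_cont_def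
proof (intro exI[of _ "\<lambda>y t. ennreal (d y t)"] conjI allI)
  show "(\<lambda>t. ennreal (d y t)) \<in> borel_measurable borel" for y using d(1) by measurable
  show "AE t in lborel. 0 \<le> t \<and> t < T \<longrightarrow> (\<Sum>y\<in>UNIV. ennreal (d y t)) = 1"
    using sum by eventually_elim (use d(2) in \<open>auto simp: sum_nonneg\<close>)
qed (rule d(3))

lemma integral_density_real:
  fixes f :: "real \<Rightarrow> real"
  assumes "d \<in> borel_measurable borel" "\<And>t. 0 \<le> d t" "f \<in> borel_measurable borel"
  shows "integral\<^sup>L (density lborel (\<lambda>t. ennreal (d t))) f = (\<integral>t. d t * f t \<partial>lborel)"
    and "integrable (density lborel (\<lambda>t. ennreal (d t))) f \<longleftrightarrow> integrable lborel (\<lambda>t. d t * f t)"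
  using integral_density[of f lborel d] integrable_density[of f lborel d] assms by simp_all

lemma sum_integral_time_abs_cont:
  fixes \<mu> :: "'v::finite \<Rightarrow> real measure" and f :: "real \<Rightarrow> real"
  assumes c: "\<And>y. circ_meas T (\<mu> y)" and tac: "time_abs_cont T \<mu>"
    and f: "f \<in> borel_measurable borel" "bounded (range f)"
  shows "(\<Sum>y\<in>UNIV. integral\<^sup>L (\<mu> y) f) = integral\<^sup>L (lborel_period T) f"
proof -
  obtain d where d: "\<And>y. d y \<in> borel_measurable borel" "\<And>y t. 0 \<le> d y t"
      "\<And>y. \<mu> y = density lborel (\<lambda>t. ennreal (d y t))"
    and sum: "AE t in lborel. (\<Sum>y\<in>UNIV. d y t) = indicator {0..<T} t"
    using time_abs_cont_real_densities[OF c tac] by blast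
  have int: "integrable lborel (\<lambda>t. d y t * f t)" for y
    using integral_density_real(2)[OF d(1,2) f(1)] integrable_circ_meas[OF c f] d(3) by metis
  have "(\<Sum>y\<in>UNIV. integral\<^sup>L (\<mu> y) f) = (\<Sum>y\<in>UNIV. \<integral>t. d y t * f t \<partial>lborel)"
    using integral_density_real(1)[OF d(1,2) f(1)] d(3) by simp
  also have "\<dots> = (\<integral>t. (\<Sum>y\<in>UNIV. d y t) * f t \<partial>lborel)"
    using int by (simp add: sum_distrib_right)
  also have "\<dots> = (\<integral>t. indicator {0..<T} t * f t \<partial>lborel)"
    by (rule integral_cong_AE) (use sum f(1) d(1) in \<open>auto elim: eventually_mono\<close>)
  also have "\<dots> = integral\<^sup>L (lborel_period T) f"
    unfolding lborel_period_density by (rule integral_density_real(1)[symmetric]) (use f in auto)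
  finally show ?thesis .
qed

lemma integral_le_lborel_period:
  fixes \<mu> :: "'v::finite \<Rightarrow> real measure" and u :: "real \<Rightarrow> real"
  assumes T: "T > 0" and c: "\<And>y. circ_meas T (\<mu> y)" and tac: "time_abs_cont T \<mu>"
    and u: "u \<in> borel_measurable borel" "bounded (range u)" "\<And>t. 0 \<le> u t"
  shows "integral\<^sup>L (\<mu> y) u \<le> integral\<^sup>L (lborel_period T) u"
proof -
  obtain d where d: "\<And>y. d y \<in> borel_measurable borel" "\<And>y t. 0 \<le> d y t"
      "\<And>y. \<mu> y = density lborel (\<lambda>t. ennreal (d y t))"
    and sum: "AE t in lborel. (\<Sum>y\<in>UNIV. d y t) = indicator {0..<T} t"
    using time_abs_cont_real_densities[OF c tac] by blast
  have "integral\<^sup>L (\<mu> y) u = (\<integral>t. d y t * u t \<partial>lborel)"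
    using integral_density_real(1)[OF d(1,2) u(1)] d(3) by simp
  also have "\<dots> \<le> (\<integral>t. indicator {0..<T} t * u t \<partial>lborel)"
  proof (rule integral_mono_AE)
    show "integrable lborel (\<lambda>t. d y t * u t)"
      using integral_density_real(2)[OF d(1,2) u(1)] integrable_circ_meas[OF c u(1,2)] d(3) by metis
    show "integrable lborel (\<lambda>t. indicator {0..<T} t * u t)"
      using integral_density_real(2)[of "indicator {0..<T}" u] u(1)
        integrable_circ_meas[OF circ_meas_lborel_period[OF T] u(1,2)]
      unfolding lborel_period_density by auto
    show "AE t in lborel. d y t * u t \<le> indicator {0..<T} t * u t"
      using sum
    proof eventually_elim
      case (elim t)
      have "d y t \<le> (\<Sum>y\<in>UNIV. d y t)" by (rule member_le_sum) (use d(2) in auto)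
      then show ?case using elim u(3)[of t] by (simp add: mult_right_mono)
    qed
  qed
  also have "\<dots> = integral\<^sup>L (lborel_period T) u"
    unfolding lborel_period_density by (rule integral_density_real(1)[symmetric]) (use u in auto)
  finally show ?thesis .
qed

lemma nn_integral_lincomb_measures:
  fixes w m1 m2 :: "real measure" and a b :: ennreal
  assumes sets: "sets w = sets borel" "sets m1 = sets borel" "sets m2 = sets borel"
    and emeasure: "\<And>A. A \<in> sets borel \<Longrightarrow> emeasure w A = a * emeasure m1 A + b * emeasure m2 A"
    and u: "u \<in> borel_measurable borel"
  shows "(\<integral>\<^sup>+ x. u x \<partial>w) = a * (\<integral>\<^sup>+ x. u x \<partial>m1) + b * (\<integral>\<^sup>+ x. u x \<partial>m2)"
  using u
proof (induction rule: borel_measurable_induct)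
  case (cong f g)
  then have "f = g" by auto
  with cong show ?case by simp
next
  case (set A)
  then show ?case using sets emeasure by simp
next
  case (mult u c)
  have "(\<integral>\<^sup>+ x. c * u x \<partial>M) = c * (\<integral>\<^sup>+ x. u x \<partial>M)" if "sets M = sets borel" for M
    by (rule nn_integral_cmult[OF borel_measurable_sets_borel[OF that mult(2)]])
  then show ?case using mult(4) sets by (simp only: distrib_left mult.left_commute)
next
  case (add u v)
  have "(\<integral>\<^sup>+ x. v x + u x \<partial>M) = (\<integral>\<^sup>+ x. v x \<partial>M) + (\<integral>\<^sup>+ x. u x \<partial>M)" if "sets M = sets borel" for M
    by (intro nn_integral_add borel_measurable_sets_borel[OF that]) (use add in auto)
  then show ?case using add sets by (simp only: distrib_left add_ac)
next
  case (seq U)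
  have SUP_eq: "(\<integral>\<^sup>+ x. (SUP i. U i) x \<partial>M) = (SUP i. \<integral>\<^sup>+ x. U i x \<partial>M)" if "sets M = sets borel" for M
    unfolding SUP_apply using seq
    by (intro nn_integral_monotone_convergence_SUP) (auto intro: borel_measurable_sets_borel[OF that])
  have inc: "incseq (\<lambda>i. c * \<integral>\<^sup>+ x. U i x \<partial>M)" for c M
    using seq by (auto simp: incseq_def le_fun_def intro!: mult_left_mono nn_integral_mono)
  have "(\<integral>\<^sup>+ x. (SUP i. U i) x \<partial>w) = (SUP i. a * (\<integral>\<^sup>+ x. U i x \<partial>m1) + b * (\<integral>\<^sup>+ x. U i x \<partial>m2))"
    using SUP_eq[OF sets(1)] seq by simp
  also have "\<dots> = (SUP i. a * (\<integral>\<^sup>+ x. U i x \<partial>m1)) + (SUP i. b * (\<integral>\<^sup>+ x. U i x \<partial>m2))"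
    by (rule ennreal_SUP_add[OF inc inc])
  also have "\<dots> = a * (\<integral>\<^sup>+ x. (SUP i. U i) x \<partial>m1) + b * (\<integral>\<^sup>+ x. (SUP i. U i) x \<partial>m2)"
    using SUP_eq[OF sets(2)] SUP_eq[OF sets(3)] by (simp add: SUP_mult_left_ennreal)
  finally show ?case .
qed

lemma integral_convex_comb_meas:
  fixes f :: "real \<Rightarrow> real"
  assumes cc: "convex_comb_meas lam m1 m2 w" and lam: "0 \<le> lam" "lam \<le> 1"
    and m: "circ_meas T m1" "circ_meas T m2"
    and f: "f \<in> borel_measurable borel" "bounded (range f)"
  shows "integral\<^sup>L w f = lam * integral\<^sup>L m1 f + (1 - lam) * integral\<^sup>L m2 f"
proof -
  have sw: "sets w = sets borel" using cc unfolding convex_comb_meas_def by auto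
  note lincomb = nn_integral_lincomb_measures[OF sw circ_meas_sets[OF m(1)] circ_meas_sets[OF m(2)]]
  have emeasure_w: "emeasure w A = ennreal lam * emeasure m1 A + ennreal (1 - lam) * emeasure m2 A"
    if "A \<in> sets borel" for A
    using cc that unfolding convex_comb_meas_def by auto
  have i1: "integrable m1 f" and i2: "integrable m2 f" using integrable_circ_meas m f by blast+
  have "emeasure w UNIV \<noteq> \<infinity>"
    using emeasure_w[of UNIV] finite_measure.emeasure_finite[OF circ_meas_finite[OF m(1)]]
      finite_measure.emeasure_finite[OF circ_meas_finite[OF m(2)]]
    by (simp add: ennreal_mult_eq_top_iff)
  have iw: "integrable w f"
  proof -
    interpret finite_measure w
      using \<open>emeasure w UNIV \<noteq> \<infinity>\<close> sw by (intro finite_measureI) (metis sets_eq_imp_space_eq space_borel)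
    obtain B where "\<And>t. norm (f t) \<le> B" using f(2) unfolding bounded_iff by blast
    then show ?thesis by (intro integrable_const_bound[where B = B] borel_measurable_sets_borel[OF sw f(1)]) auto
  qed
  have part: "enn2real (\<integral>\<^sup>+ x. ennreal (g x) \<partial>w)
      = lam * enn2real (\<integral>\<^sup>+ x. ennreal (g x) \<partial>m1) + (1 - lam) * enn2real (\<integral>\<^sup>+ x. ennreal (g x) \<partial>m2)"
    if "g \<in> borel_measurable borel" "(\<integral>\<^sup>+ x. ennreal (g x) \<partial>m1) \<noteq> \<infinity>" "(\<integral>\<^sup>+ x. ennreal (g x) \<partial>m2) \<noteq> \<infinity>" for g
    using lincomb[OF emeasure_w, of "\<lambda>x. ennreal (g x)"] that lam
    by (simp add: enn2real_plus enn2real_mult ennreal_mult_less_top less_top)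
  have "integral\<^sup>L w f = enn2real (\<integral>\<^sup>+ x. ennreal (f x) \<partial>w) - enn2real (\<integral>\<^sup>+ x. ennreal (- f x) \<partial>w)"
    by (rule real_lebesgue_integral_def[OF iw])
  also have "\<dots> = lam * integral\<^sup>L m1 f + (1 - lam) * integral\<^sup>L m2 f"
    unfolding real_lebesgue_integral_def[OF i1] real_lebesgue_integral_def[OF i2]
    using part[of f] part[of "\<lambda>x. - f x"] integrableD[OF i1] integrableD[OF i2] f(1)
    by (simp add: algebra_simps)
  finally show ?thesis .
qed

lemma sum_convex_comb:
  fixes f g h :: "'i \<Rightarrow> real"
  assumes "\<And>i. i \<in> I \<Longrightarrow> f i = lam * g i + (1 - lam) * h i"
  shows "sum f I = lam * sum g I + (1 - lam) * sum h I"
  using assms by (simp add: sum.distrib sum_distrib_left)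

lemma convex_comb_pairD:
  assumes "convex_comb_pair lam p q w"
  shows "convex_comb_meas lam (fst p y) (fst q y) (fst w y)" "convex_comb_meas lam (snd p e) (snd q e) (snd w e)"
  using assms unfolding convex_comb_pair_def by blast+

lemma time_abs_cont_convex_comb:
  fixes \<mu> \<nu> \<rho> :: "'v::finite \<Rightarrow> real measure"
  assumes cc: "\<And>y. convex_comb_meas lam (\<mu> y) (\<nu> y) (\<rho> y)" and lam: "0 \<le> lam" "lam \<le> 1"
    and c: "\<And>y. circ_meas T (\<mu> y)" "\<And>y. circ_meas T (\<nu> y)"
    and tac: "time_abs_cont T \<mu>" "time_abs_cont T \<nu>"
  shows "time_abs_cont T \<rho>"
proof -
  obtain d1 where d1: "\<And>y. d1 y \<in> borel_measurable borel" "\<And>y t. 0 \<le> d1 y t"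
      "\<And>y. \<mu> y = density lborel (\<lambda>t. ennreal (d1 y t))"
    and sum1: "AE t in lborel. (\<Sum>y\<in>UNIV. d1 y t) = indicator {0..<T} t"
    using time_abs_cont_real_densities[OF c(1) tac(1)] by blast
  obtain d2 where d2: "\<And>y. d2 y \<in> borel_measurable borel" "\<And>y t. 0 \<le> d2 y t"
      "\<And>y. \<nu> y = density lborel (\<lambda>t. ennreal (d2 y t))"
    and sum2: "AE t in lborel. (\<Sum>y\<in>UNIV. d2 y t) = indicator {0..<T} t"
    using time_abs_cont_real_densities[OF c(2) tac(2)] by blast
  define d where "d y t = lam * d1 y t + (1 - lam) * d2 y t" for y t
  have d_meas: "d y \<in> borel_measurable borel" for y unfolding d_def using d1(1) d2(1) by simp
  have d_nonneg: "0 \<le> d y t" for y t unfolding d_def using d1(2) d2(2) lam by simp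
  have "\<rho> y = density lborel (\<lambda>t. ennreal (d y t))" for y
  proof (rule measure_eqI)
    show "sets (\<rho> y) = sets (density lborel (\<lambda>t. ennreal (d y t)))"
      using cc[of y] unfolding convex_comb_meas_def by simp
    fix A assume "A \<in> sets (\<rho> y)"
    then have A: "A \<in> sets borel" using cc[of y] unfolding convex_comb_meas_def by simp
    have "emeasure (density lborel (\<lambda>t. ennreal (d y t))) A = (\<integral>\<^sup>+ t. ennreal (d y t) * indicator A t \<partial>lborel)"
      using A d_meas by (subst emeasure_density) auto
    also have "\<dots> = (\<integral>\<^sup>+ t. ennreal lam * (ennreal (d1 y t) * indicator A t)
                        + ennreal (1 - lam) * (ennreal (d2 y t) * indicator A t) \<partial>lborel)"
      by (intro nn_integral_cong) (use lam d1(2) d2(2) in \<open>simp add: d_def ennreal_mult distrib_right mult.assoc\<close>)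
    also have "\<dots> = ennreal lam * emeasure (\<mu> y) A + ennreal (1 - lam) * emeasure (\<nu> y) A"
      using A d1(1) d2(1) by (simp add: nn_integral_add nn_integral_cmult d1(3) d2(3) emeasure_density)
    also have "\<dots> = emeasure (\<rho> y) A" using cc[of y] A unfolding convex_comb_meas_def by simp
    finally show "emeasure (\<rho> y) A = emeasure (density lborel (\<lambda>t. ennreal (d y t))) A" by simp
  qed
  moreover have "AE t in lborel. (\<Sum>y\<in>UNIV. d y t) = indicator {0..<T} t"
    using sum1 sum2
  proof eventually_elim
    case (elim t)
    have "(\<Sum>y\<in>UNIV. d y t) = lam * (\<Sum>y\<in>UNIV. d1 y t) + (1 - lam) * (\<Sum>y\<in>UNIV. d2 y t)"
      unfolding d_def by (simp add: sum.distrib sum_distrib_left)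
    with elim show ?case by (simp add: algebra_simps)
  qed
  ultimately show ?thesis by (rule time_abs_contI[OF d_meas d_nonneg])
qed

definition period_copies :: "real \<Rightarrow> real \<Rightarrow> real set" where
  "period_copies T a = {s. \<exists>k::int. real_of_int k * T \<le> s \<and> s \<le> real_of_int k * T + a}"

(* Continuous periodic test functions decreasing to the indicator of [0,a] + T Z; they turn
   time-absolute continuity into a family of weakly closed conditions. *)
definition cutoff :: "real \<Rightarrow> real \<Rightarrow> nat \<Rightarrow> real \<Rightarrow> real" where
  "cutoff T a n t = max 0 (1 - real (Suc n) * infdist t (period_copies T a))"

lemma zero_in_period_copies: "a \<ge> 0 \<Longrightarrow> 0 \<in> period_copies T a"
  unfolding period_copies_def by (auto intro!: exI[of _ 0])

lemma period_copies_shift: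
  assumes "s \<in> period_copies T a"
  shows "s + T \<in> period_copies T a" "s - T \<in> period_copies T a"
proof -
  obtain k :: int where k: "real_of_int k * T \<le> s" "s \<le> real_of_int k * T + a"
    using assms unfolding period_copies_def by blast
  have "real_of_int (k + 1) * T \<le> s + T \<and> s + T \<le> real_of_int (k + 1) * T + a"
    "real_of_int (k - 1) * T \<le> s - T \<and> s - T \<le> real_of_int (k - 1) * T + a"
    using k by (simp_all add: algebra_simps)
  then show "s + T \<in> period_copies T a" "s - T \<in> period_copies T a"
    unfolding period_copies_def by blast+
qed

lemma infdist_le_if_closer:
  assumes "A \<noteq> {}" and "\<And>s. s \<in> A \<Longrightarrow> \<exists>s'\<in>A. dist x s' \<le> dist y s"
  shows "infdist x A \<le> infdist y A"
proof -
  have "infdist x A \<le> dist y s" if "s \<in> A" for s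
    using assms(2)[OF that] by (meson infdist_le order_trans)
  then show ?thesis unfolding infdist_notempty[OF assms(1)] using assms(1) by (intro cINF_greatest) auto
qed

lemma infdist_period_copies_periodic:
  assumes "a \<ge> 0" shows "infdist (t + T) (period_copies T a) = infdist t (period_copies T a)"
proof -
  have ne: "period_copies T a \<noteq> {}" using zero_in_period_copies[OF assms] by blast
  show ?thesis
  proof (rule antisym[OF infdist_le_if_closer[OF ne] infdist_le_if_closer[OF ne]])
    show "\<exists>s'\<in>period_copies T a. dist (t + T) s' \<le> dist t s" if "s \<in> period_copies T a" for s
      using that by (intro bexI[of _ "s + T"]) (auto simp: dist_real_def period_copies_shift)
    show "\<exists>s'\<in>period_copies T a. dist t s' \<le> dist (t + T) s" if "s \<in> period_copies T a" for s
      using that by (intro bexI[of _ "s - T"]) (auto simp: dist_real_def period_copies_shift)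
  qed
qed

lemma continuous_cutoff: "continuous_on UNIV (cutoff T a n)"
  unfolding cutoff_def by (intro continuous_intros)

lemma borel_measurable_cutoff: "cutoff T a n \<in> borel_measurable borel"
  by (rule borel_measurable_continuous_onI[OF continuous_cutoff])

lemma periodic_cutoff: "a \<ge> 0 \<Longrightarrow> periodic_fun T (cutoff T a n)"
  unfolding periodic_fun_def cutoff_def using infdist_period_copies_periodic by simp

lemma cutoff_bounds: "0 \<le> cutoff T a n t" "cutoff T a n t \<le> 1"
  unfolding cutoff_def using infdist_nonneg[of t "period_copies T a"] by auto

lemma bounded_range_cutoff: "bounded (range (cutoff T a n))"
  unfolding bounded_iff using cutoff_bounds by (intro exI[of _ 1]) auto

lemma infdist_period_copies_ge:
  assumes T: "T > 0" and a: "0 \<le> a" and t: "a < t" "t < T"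
  shows "min (t - a) (T - t) \<le> infdist t (period_copies T a)"
proof -
  have "min (t - a) (T - t) \<le> dist t s" if s: "s \<in> period_copies T a" for s
  proof -
    obtain k :: int where k: "real_of_int k * T \<le> s" "s \<le> real_of_int k * T + a"
      using s unfolding period_copies_def by blast
    show ?thesis
    proof (cases "k \<le> 0")
      case True
      then have "real_of_int k * T \<le> 0" using T by (simp add: mult_nonpos_nonneg)
      then show ?thesis using k t by (auto simp: dist_real_def)
    next
      case False
      then have "T \<le> real_of_int k * T" using T by simp
      then have "T \<le> s" using k by linarith
      then show ?thesis using t by (auto simp: dist_real_def)
    qed
  qed
  moreover have "period_copies T a \<noteq> {}" using zero_in_period_copies[OF a] by blast
  ultimately show ?thesis unfolding infdist_def by (auto intro: cINF_greatest)
qed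

lemma cutoff_tendsto:
  assumes T: "T > 0" and a: "0 \<le> a" and t: "t \<in> {0..<T}"
  shows "(\<lambda>n. cutoff T a n t) \<longlonglongrightarrow> indicator {..a} t"
proof (cases "t \<le> a")
  case True
  then have "t \<in> period_copies T a" unfolding period_copies_def using t by (auto intro!: exI[of _ 0])
  then show ?thesis using True by (simp add: cutoff_def)
next
  case False
  define \<delta> where "\<delta> = min (t - a) (T - t)"
  have \<delta>: "0 < \<delta>" "\<delta> \<le> infdist t (period_copies T a)"
    using False t infdist_period_copies_ge[OF T a] unfolding \<delta>_def by auto
  obtain N :: nat where N: "1 / \<delta> < real N" using reals_Archimedean2 by blast
  have "cutoff T a n t = 0" if "N \<le> n" for n
  proof -
    have "1 < real N * \<delta>" using N \<delta> by (simp add: divide_less_eq)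
    also have "\<dots> \<le> real (Suc n) * infdist t (period_copies T a)"
      using that \<delta> by (intro mult_mono) auto
    finally show ?thesis unfolding cutoff_def by simp
  qed
  then have "(\<lambda>n. cutoff T a n t) \<longlonglongrightarrow> 0"
    by (intro tendsto_eventually) (auto simp: eventually_sequentially)
  then show ?thesis using False by simp
qed

lemma integral_cutoff_tendsto:
  assumes T: "T > 0" and a: "0 \<le> a" and m: "circ_meas T m"
  shows "(\<lambda>n. integral\<^sup>L m (cutoff T a n)) \<longlonglongrightarrow> measure m {..a}"
proof -
  interpret finite_measure m using circ_meas_finite[OF m] .
  have "(\<lambda>n. integral\<^sup>L m (cutoff T a n)) \<longlonglongrightarrow> integral\<^sup>L m (indicator {..a} :: real \<Rightarrow> real)"
  proof (rule integral_dominated_convergence[where w = "\<lambda>_. 1"])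
    show "AE x in m. (\<lambda>n. cutoff T a n x) \<longlonglongrightarrow> indicator {..a} x"
      using AE_circ_meas[OF m] by eventually_elim (rule cutoff_tendsto[OF T a])
    show "cutoff T a n \<in> borel_measurable m" for n
      by (rule measurable_circ_meas[OF m borel_measurable_cutoff])
    show "(indicator {..a} :: real \<Rightarrow> real) \<in> borel_measurable m"
      by (rule measurable_circ_meas[OF m]) simp
  qed (use cutoff_bounds in auto)
  then show ?thesis using circ_meas_space[OF m] by simp
qed

definition sum_measures :: "('v::finite \<Rightarrow> real measure) \<Rightarrow> real measure" where
  "sum_measures \<mu> = measure_of UNIV (sets borel) (\<lambda>A. \<Sum>y\<in>UNIV. emeasure (\<mu> y) A)"

lemma sets_sum_measures [simp]: "sets (sum_measures \<mu>) = sets borel"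
proof -
  interpret sigma_algebra UNIV "sets borel" using sets.sigma_algebra_axioms[of borel] by simp
  show ?thesis unfolding sum_measures_def by simp
qed

lemma emeasure_sum_measures:
  fixes \<mu> :: "'v::finite \<Rightarrow> real measure"
  assumes s: "\<And>y. sets (\<mu> y) = sets borel" and A: "A \<in> sets borel"
  shows "emeasure (sum_measures \<mu>) A = (\<Sum>y\<in>UNIV. emeasure (\<mu> y) A)"
  unfolding sum_measures_def
proof (rule emeasure_measure_of_sigma)
  show "sigma_algebra UNIV (sets borel)" using sets.sigma_algebra_axioms[of borel] by simp
  show "positive (sets borel) (\<lambda>A. \<Sum>y\<in>UNIV. emeasure (\<mu> y) A)" unfolding positive_def by simp
  show "countably_additive (sets borel) (\<lambda>A. \<Sum>y\<in>UNIV. emeasure (\<mu> y) A)"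
    unfolding countably_additive_def
  proof (intro allI impI)
    fix F :: "nat \<Rightarrow> real set"
    assume F: "range F \<subseteq> sets borel" "disjoint_family F"
    have "(\<Sum>i. \<Sum>y\<in>UNIV. emeasure (\<mu> y) (F i)) = (\<Sum>y\<in>UNIV. \<Sum>i. emeasure (\<mu> y) (F i))"
      by (rule suminf_sum) (rule summableI)
    also have "\<dots> = (\<Sum>y\<in>UNIV. emeasure (\<mu> y) (\<Union>i. F i))"
      by (intro sum.cong refl suminf_emeasure) (use F s in auto)
    finally show "(\<Sum>i. \<Sum>y\<in>UNIV. emeasure (\<mu> y) (F i)) = (\<Sum>y\<in>UNIV. emeasure (\<mu> y) (\<Union> (range F)))" .
  qed
qed (rule A)

lemma measure_atMost_circ_meas:
  assumes m: "circ_meas T m"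
  shows "a < 0 \<Longrightarrow> measure m {..a} = 0" and "T \<le> a \<Longrightarrow> measure m {..a} = measure m UNIV"
proof -
  assume "a < 0"
  then have "emeasure m {..a} \<le> emeasure m (- {0..<T})"
    using m by (intro emeasure_mono) (auto simp: circ_meas_sets)
  then show "measure m {..a} = 0" using m by (simp add: circ_meas_def measure_def)
next
  assume "T \<le> a"
  then have "emeasure m {..a} = emeasure m UNIV"
    by (intro emeasure_eq_AE) (use AE_circ_meas[OF m] circ_meas_sets[OF m] in \<open>auto elim: eventually_mono\<close>)
  then show "measure m {..a} = measure m UNIV" by (simp add: measure_def)
qed

lemma sum_measures_eq_lborel_period:
  fixes \<mu> :: "'v::finite \<Rightarrow> real measure"
  assumes T: "T > 0" and c: "\<And>y. circ_meas T (\<mu> y)" and total: "(\<Sum>y\<in>UNIV. measure (\<mu> y) UNIV) = T"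
    and cutoffs: "\<And>a n. 0 \<le> a \<Longrightarrow> a < T \<Longrightarrow>
      (\<Sum>y\<in>UNIV. integral\<^sup>L (\<mu> y) (cutoff T a n)) = integral\<^sup>L (lborel_period T) (cutoff T a n)"
  shows "sum_measures \<mu> = lborel_period T"
proof -
  note leb = circ_meas_lborel_period[OF T]
  have s: "sets (\<mu> y) = sets borel" for y by (rule circ_meas_sets[OF c])
  have fin: "emeasure (\<mu> y) A \<noteq> \<top>" for y A
    using finite_measure.emeasure_finite[OF circ_meas_finite[OF c[of y]]] .
  have measure_sum: "measure (sum_measures \<mu>) A = (\<Sum>y\<in>UNIV. measure (\<mu> y) A)" if "A \<in> sets borel" for A
    unfolding measure_def emeasure_sum_measures[OF s that] using fin
    by (subst enn2real_sum) (auto simp: less_top comp_def)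
  have cdf_eq: "(\<Sum>y\<in>UNIV. measure (\<mu> y) {..a}) = measure (lborel_period T) {..a}" for a
  proof -
    consider "a < 0" | "0 \<le> a" "a < T" | "T \<le> a" by linarith
    then show ?thesis
    proof cases
      case 1
      then show ?thesis using measure_atMost_circ_meas(1)[OF c] measure_atMost_circ_meas(1)[OF leb] by simp
    next
      case 2
      have "(\<lambda>n. \<Sum>y\<in>UNIV. integral\<^sup>L (\<mu> y) (cutoff T a n)) \<longlonglongrightarrow> (\<Sum>y\<in>UNIV. measure (\<mu> y) {..a})"
        by (intro tendsto_sum integral_cutoff_tendsto[OF T 2(1) c])
      moreover have "(\<lambda>n. \<Sum>y\<in>UNIV. integral\<^sup>L (\<mu> y) (cutoff T a n)) \<longlonglongrightarrow> measure (lborel_period T) {..a}"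
        unfolding cutoffs[OF 2] by (rule integral_cutoff_tendsto[OF T 2(1) leb])
      ultimately show ?thesis by (rule LIMSEQ_unique)
    next
      case 3
      then show ?thesis using measure_atMost_circ_meas(2)[OF c] measure_atMost_circ_meas(2)[OF leb]
          total measure_lborel_period_UNIV[OF T] by simp
    qed
  qed
  have "emeasure (sum_measures \<mu>) UNIV \<noteq> \<infinity>"
    using emeasure_sum_measures[of \<mu> UNIV] s fin by (simp add: less_top)
  then have "finite_measure (sum_measures \<mu>)"
    by (intro finite_measureI) (metis sets_eq_imp_space_eq sets_sum_measures space_borel)
  then have "finite_borel_measure (sum_measures \<mu>)"
    unfolding finite_borel_measure_def finite_borel_measure_axioms_def by simp
  moreover have "finite_borel_measure (lborel_period T)"
    using circ_meas_finite[OF leb] unfolding finite_borel_measure_def finite_borel_measure_axioms_def by simp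
  ultimately show ?thesis by (rule cdf_unique') (auto simp: cdf_def measure_sum cdf_eq)
qed

lemma time_abs_cont_if_sum_measures_eq:
  fixes \<mu> :: "'v::finite \<Rightarrow> real measure"
  assumes s: "\<And>y. sets (\<mu> y) = sets borel" and eq: "sum_measures \<mu> = lborel_period T"
  shows "time_abs_cont T \<mu>"
proof -
  have ac: "absolutely_continuous lborel (\<mu> y)" for y
    unfolding absolutely_continuous_def
  proof
    fix N :: "real set" assume N: "N \<in> null_sets lborel"
    then have Nb: "N \<in> sets borel" by auto
    have "emeasure (lborel_period T) N \<le> emeasure lborel N"
      using emeasure_lborel_period[OF Nb] Nb by (simp add: emeasure_mono)
    then have "(\<Sum>y\<in>UNIV. emeasure (\<mu> y) N) = 0"
      using emeasure_sum_measures[of \<mu> N] s Nb N eq by auto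
    then show "N \<in> null_sets (\<mu> y)" using Nb s by auto
  qed
  define m where "m y = RN_deriv lborel (\<mu> y)" for y
  have m_meas: "m y \<in> borel_measurable borel" for y
    unfolding m_def using borel_measurable_RN_deriv[of lborel "\<mu> y"] by simp
  have m_density: "\<mu> y = density lborel (m y)" for y
    unfolding m_def using sigma_finite_measure.density_RN_deriv[OF sigma_finite_lborel ac] s by simp
  have "density lborel (\<lambda>t. \<Sum>y\<in>UNIV. m y t) = density lborel (indicator {0..<T})"
  proof (rule measure_eqI)
    fix A assume "A \<in> sets (density lborel (\<lambda>t. \<Sum>y\<in>UNIV. m y t))"
    then have A: "A \<in> sets borel" by simp
    have "emeasure (density lborel (\<lambda>t. \<Sum>y\<in>UNIV. m y t)) A
        = (\<integral>\<^sup>+ t. (\<Sum>y\<in>UNIV. m y t * indicator A t) \<partial>lborel)"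
      using A m_meas by (subst emeasure_density) (auto simp: sum_distrib_right)
    also have "\<dots> = (\<Sum>y\<in>UNIV. \<integral>\<^sup>+ t. m y t * indicator A t \<partial>lborel)"
      by (rule nn_integral_sum) (use m_meas A in auto)
    also have "\<dots> = emeasure (sum_measures \<mu>) A"
      unfolding emeasure_sum_measures[OF s A]
      by (intro sum.cong refl) (use A m_meas m_density in \<open>simp add: emeasure_density\<close>)
    finally show "emeasure (density lborel (\<lambda>t. \<Sum>y\<in>UNIV. m y t)) A
        = emeasure (density lborel (indicator {0..<T})) A"
      by (simp add: eq lborel_period_def)
  qed simp
  then have "AE t in lborel. (\<Sum>y\<in>UNIV. m y t) = indicator {0..<T} t"
    by (subst (asm) sigma_finite_measure.density_unique_iff[OF sigma_finite_lborel]) (use m_meas in auto)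
  then show ?thesis unfolding time_abs_cont_def
    using m_meas m_density by (intro exI[of _ m]) (auto elim: eventually_mono)
qed

lemma time_abs_cont_iff_cutoff_integrals:
  fixes \<mu> :: "'v::finite \<Rightarrow> real measure"
  assumes T: "T > 0" and c: "\<And>y. circ_meas T (\<mu> y)" and total: "(\<Sum>y\<in>UNIV. measure (\<mu> y) UNIV) = T"
  shows "time_abs_cont T \<mu> \<longleftrightarrow> (\<forall>a n. 0 \<le> a \<longrightarrow> a < T \<longrightarrow>
      (\<Sum>y\<in>UNIV. integral\<^sup>L (\<mu> y) (cutoff T a n)) = integral\<^sup>L (lborel_period T) (cutoff T a n))"
proof
  show "time_abs_cont T \<mu>" if "\<forall>a n. 0 \<le> a \<longrightarrow> a < T \<longrightarrow>
      (\<Sum>y\<in>UNIV. integral\<^sup>L (\<mu> y) (cutoff T a n)) = integral\<^sup>L (lborel_period T) (cutoff T a n)"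
    using circ_meas_sets[OF c] sum_measures_eq_lborel_period[where \<mu> = \<mu>, OF T c total]
    by (rule time_abs_cont_if_sum_measures_eq) (use that in auto)
qed (use sum_integral_time_abs_cont[where \<mu> = \<mu>, OF c _ borel_measurable_cutoff bounded_range_cutoff] in auto)

definition lipschitz_envelope :: "(real \<Rightarrow> real) \<Rightarrow> nat \<Rightarrow> real \<Rightarrow> real" where
  "lipschitz_envelope g n t = (SUP s. g s - real n * \<bar>s - t\<bar>)"

context
  fixes g :: "real \<Rightarrow> real" and G :: real
  assumes bound: "\<And>t. \<bar>g t\<bar> \<le> G"
begin

lemma lipschitz_envelope_term_le: "g s - real n * \<bar>s - t\<bar> \<le> G"
  using bound[of s] by (smt (verit) mult_nonneg_nonneg of_nat_0_le_iff abs_ge_zero)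

lemma bdd_above_lipschitz_envelope: "bdd_above (range (\<lambda>s. g s - real n * \<bar>s - t\<bar>))"
  using lipschitz_envelope_term_le by (intro bdd_aboveI2)

lemma lipschitz_envelope_ge: "g t \<le> lipschitz_envelope g n t"
  unfolding lipschitz_envelope_def using cSUP_upper[OF UNIV_I bdd_above_lipschitz_envelope[of n t], of t] by simp

lemma abs_lipschitz_envelope_le: "\<bar>lipschitz_envelope g n t\<bar> \<le> G"
proof -
  have "lipschitz_envelope g n t \<le> G"
    unfolding lipschitz_envelope_def by (rule cSUP_least) (auto intro: lipschitz_envelope_term_le)
  then show ?thesis using lipschitz_envelope_ge[of t n] bound[of t] by linarith
qed

lemma lipschitz_envelope_le_shift:
  assumes "\<And>s. \<exists>s'. g s - real n * \<bar>s - t\<bar> \<le> g s' - real n * \<bar>s' - t'\<bar> + c"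
  shows "lipschitz_envelope g n t \<le> lipschitz_envelope g n t' + c"
  unfolding lipschitz_envelope_def
proof (rule cSUP_least)
  fix s
  obtain s' where "g s - real n * \<bar>s - t\<bar> \<le> g s' - real n * \<bar>s' - t'\<bar> + c" using assms by blast
  also have "\<dots> \<le> (SUP s. g s - real n * \<bar>s - t'\<bar>) + c"
    using cSUP_upper[OF UNIV_I bdd_above_lipschitz_envelope] by simp
  finally show "g s - real n * \<bar>s - t\<bar> \<le> (SUP s. g s - real n * \<bar>s - t'\<bar>) + c" .
qed simp

lemma lipschitz_envelope_lipschitz: "lipschitz_envelope g n t \<le> lipschitz_envelope g n t' + real n * \<bar>t - t'\<bar>"
proof (rule lipschitz_envelope_le_shift)
  fix s
  have "real n * \<bar>s - t'\<bar> \<le> real n * \<bar>s - t\<bar> + real n * \<bar>t - t'\<bar>"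
    by (metis abs_triangle_ineq diff_add_cancel add_diff_eq distrib_left mult_left_mono of_nat_0_le_iff)
  then show "\<exists>s'. g s - real n * \<bar>s - t\<bar> \<le> g s' - real n * \<bar>s' - t'\<bar> + real n * \<bar>t - t'\<bar>"
    by (intro exI[of _ s]) linarith
qed

lemma continuous_lipschitz_envelope: "continuous_on UNIV (lipschitz_envelope g n)"
proof (rule lipschitz_on_continuous_on)
  show "(real n)-lipschitz_on UNIV (lipschitz_envelope g n)"
  proof (rule lipschitz_onI)
    fix x y :: real
    show "dist (lipschitz_envelope g n x) (lipschitz_envelope g n y) \<le> real n * dist x y"
      using lipschitz_envelope_lipschitz[of n x y] lipschitz_envelope_lipschitz[of n y x]
      by (simp add: dist_real_def abs_minus_commute abs_le_iff)
  qed simp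
qed

lemma periodic_lipschitz_envelope:
  assumes "periodic_fun T g" shows "periodic_fun T (lipschitz_envelope g n)"
  unfolding periodic_fun_def
proof
  fix t
  have g: "g (s + T) = g s" "g (s - T) = g s" for s
    using assms unfolding periodic_fun_def by (metis diff_add_cancel)+
  show "lipschitz_envelope g n (t + T) = lipschitz_envelope g n t"
    using lipschitz_envelope_le_shift[of n "t + T" t 0] lipschitz_envelope_le_shift[of n t "t + T" 0]
    by (smt (verit, best) g)
qed

lemma lipschitz_envelope_tendsto:
  assumes "isCont g t" shows "(\<lambda>n. lipschitz_envelope g n t) \<longlonglongrightarrow> g t"
  unfolding lim_sequentially
proof (intro allI impI)
  fix \<epsilon> :: real assume "\<epsilon> > 0"
  then obtain \<eta> where \<eta>: "\<eta> > 0" "\<And>s. dist s t < \<eta> \<Longrightarrow> dist (g s) (g t) < \<epsilon> / 2"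
    using assms unfolding continuous_at_eps_delta by (metis half_gt_zero)
  obtain N :: nat where N: "2 * G / \<eta> < real N" using reals_Archimedean2 by blast
  have le: "lipschitz_envelope g n t \<le> g t + \<epsilon> / 2" if n: "N \<le> n" for n
    unfolding lipschitz_envelope_def
  proof (rule cSUP_least)
    fix s
    show "g s - real n * \<bar>s - t\<bar> \<le> g t + \<epsilon> / 2"
    proof (cases "\<bar>s - t\<bar> < \<eta>")
      case True
      then have "\<bar>g s - g t\<bar> < \<epsilon> / 2" using \<eta>(2)[of s] by (simp add: dist_real_def)
      then show ?thesis by (smt (verit) mult_nonneg_nonneg of_nat_0_le_iff abs_ge_zero)
    next
      case False
      have "2 * G < real N * \<eta>" using N \<eta>(1) by (simp add: divide_less_eq)
      also have "\<dots> \<le> real n * \<bar>s - t\<bar>" using n False \<eta>(1) by (intro mult_mono) auto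
      finally show ?thesis using bound[of s] bound[of t] \<open>\<epsilon> > 0\<close> by linarith
    qed
  qed simp
  then show "\<exists>N. \<forall>n\<ge>N. dist (lipschitz_envelope g n t) (g t) < \<epsilon>"
  proof (intro exI[of _ N] allI impI)
    fix n assume "N \<le> n"
    then have "lipschitz_envelope g n t \<le> g t + \<epsilon> / 2" by (rule le)
    then show "dist (lipschitz_envelope g n t) (g t) < \<epsilon>"
      using lipschitz_envelope_ge[of t n] \<open>\<epsilon> > 0\<close> by (simp add: dist_real_def)
  qed
qed


lemma ex_continuous_majorant:
  assumes T: "T > 0" and g: "g \<in> borel_measurable borel" "periodic_fun T g"
    and cont: "AE t in lborel. t \<in> {0..<T} \<longrightarrow> isCont g t" and \<epsilon>: "\<epsilon> > 0"
  obtains h where "continuous_on UNIV h" "periodic_fun T h" "\<And>t. g t \<le> h t" "\<And>t. \<bar>h t\<bar> \<le> G"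
    "integral\<^sup>L (lborel_period T) (\<lambda>t. h t - g t) < \<epsilon>"
proof -
  note leb = circ_meas_lborel_period[OF T]
  interpret finite_measure "lborel_period T" using circ_meas_finite[OF leb] .
  let ?h = "lipschitz_envelope g"
  have "(\<lambda>n. integral\<^sup>L (lborel_period T) (\<lambda>t. ?h n t - g t)) \<longlonglongrightarrow> integral\<^sup>L (lborel_period T) (\<lambda>t. 0)"
  proof (rule integral_dominated_convergence[where w = "\<lambda>_. 2 * G"])
    show "(\<lambda>t. ?h n t - g t) \<in> borel_measurable (lborel_period T)" for n
      using borel_measurable_continuous_onI[OF continuous_lipschitz_envelope] g(1)
      by (intro measurable_circ_meas[OF leb]) simp
    have "AE t in lborel_period T. t \<in> {0..<T} \<longrightarrow> isCont g t"
      unfolding lborel_period_def using cont by (subst AE_density) (auto elim: eventually_mono)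
    then show "AE t in lborel_period T. (\<lambda>n. ?h n t - g t) \<longlonglongrightarrow> 0"
      using AE_circ_meas[OF leb]
    proof eventually_elim
      case (elim t)
      then have "(\<lambda>n. ?h n t) \<longlonglongrightarrow> g t" using lipschitz_envelope_tendsto by blast
      then show ?case by (rule LIM_zero)
    qed
    show "AE t in lborel_period T. norm (?h n t - g t) \<le> 2 * G" for n
    proof (rule AE_I2)
      fix t
      show "norm (?h n t - g t) \<le> 2 * G"
        using abs_lipschitz_envelope_le[of n t] bound[of t] by (simp add: abs_le_iff)
    qed
  qed simp_all
  then have "eventually (\<lambda>n. integral\<^sup>L (lborel_period T) (\<lambda>t. ?h n t - g t) < \<epsilon>) sequentially"
    using \<epsilon> by (intro order_tendstoD(2)) auto
  then obtain n where "integral\<^sup>L (lborel_period T) (\<lambda>t. ?h n t - g t) < \<epsilon>"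
    unfolding eventually_sequentially by blast
  then show ?thesis
    using that continuous_lipschitz_envelope periodic_lipschitz_envelope[OF g(2)]
      lipschitz_envelope_ge abs_lipschitz_envelope_le
    by blast
qed

end

lemma MstarD:
  assumes "p \<in> Mstar T E"
  shows "\<And>y. circ_meas T (fst p y)" "\<And>e. circ_meas T (snd p e)" "(\<Sum>y\<in>UNIV. measure (fst p y) UNIV) = T"
  using assms unfolding Mstar_def by auto

lemma time_abs_cont_fst_iff:
  assumes "T > 0" "p \<in> Mstar T E"
  shows "time_abs_cont T (fst p) \<longleftrightarrow> (\<forall>a n. 0 \<le> a \<longrightarrow> a < T \<longrightarrow>
      (\<Sum>y\<in>UNIV. integral\<^sup>L (fst p y) (cutoff T a n)) = integral\<^sup>L (lborel_period T) (cutoff T a n))"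
  using time_abs_cont_iff_cutoff_integrals[where \<mu> = "fst p", OF assms(1) MstarD(1,3)[OF assms(2)]] .

lemma openin_weak_top_fst:
  fixes f :: "real \<Rightarrow> real"
  assumes "open U" "continuous_on UNIV f" "periodic_fun T f"
  shows "openin (weak_top T E) {p \<in> Mstar T E. (\<integral>t. f t \<partial>(fst p y)) \<in> U}"
  unfolding weak_top_def openin_topology_generated_by_iff
  by (intro generate_topology_on.Basis UnI1 CollectI exI[of _ y] exI[of _ f] exI[of _ U] conjI refl assms)

lemma openin_weak_top_snd:
  fixes f :: "real \<Rightarrow> real"
  assumes "open U" "continuous_on UNIV f" "periodic_fun T f"
  shows "openin (weak_top T E) {p \<in> Mstar T E. (\<integral>t. f t \<partial>(snd p e)) \<in> U}"
  unfolding weak_top_def openin_topology_generated_by_iff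
  by (intro generate_topology_on.Basis UnI2 CollectI exI[of _ e] exI[of _ f] exI[of _ U] conjI refl assms)

lemma topspace_weak_top: "topspace (weak_top T E) = Mstar T E"
proof
  show "topspace (weak_top T E) \<subseteq> Mstar T E"
    unfolding weak_top_def topology_generated_by_topspace by auto
  have "openin (weak_top T E) {p \<in> Mstar T E. (\<integral>t. (0::real) \<partial>(fst p undefined)) \<in> UNIV}"
    by (rule openin_weak_top_fst) (auto simp: periodic_fun_def)
  then show "Mstar T E \<subseteq> topspace (weak_top T E)" using openin_subset by force
qed

lemma continuous_map_integral_fst:
  fixes f :: "real \<Rightarrow> real"
  assumes "continuous_on UNIV f" "periodic_fun T f"
  shows "continuous_map (weak_top T E) euclideanreal (\<lambda>p. \<integral>t. f t \<partial>(fst p y))"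
  unfolding continuous_map topspace_weak_top using openin_weak_top_fst[OF _ assms, where y = y] by auto

lemma continuous_map_integral_snd:
  fixes f :: "real \<Rightarrow> real"
  assumes "continuous_on UNIV f" "periodic_fun T f"
  shows "continuous_map (weak_top T E) euclideanreal (\<lambda>p. \<integral>t. f t \<partial>(snd p e))"
  unfolding continuous_map topspace_weak_top using openin_weak_top_snd[OF _ assms, where e = e] by auto

lemma openin_not_time_abs_cont:
  assumes T: "T > 0"
  shows "openin (weak_top T E) {p \<in> Mstar T E. \<not> time_abs_cont T (fst p)}" (is "openin _ ?S")
  unfolding openin_subopen[of _ ?S]
proof
  fix p assume "p \<in> ?S"
  then obtain a n where a: "0 \<le> a" "a < T"
    and ne: "(\<Sum>y\<in>UNIV. integral\<^sup>L (fst p y) (cutoff T a n)) \<noteq> integral\<^sup>L (lborel_period T) (cutoff T a n)"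
    using time_abs_cont_fst_iff[OF T] by blast
  let ?N = "{q \<in> topspace (weak_top T E).
      (\<Sum>y\<in>UNIV. integral\<^sup>L (fst q y) (cutoff T a n)) \<in> - {integral\<^sup>L (lborel_period T) (cutoff T a n)}}"
  have "continuous_map (weak_top T E) euclideanreal (\<lambda>q. \<Sum>y\<in>UNIV. integral\<^sup>L (fst q y) (cutoff T a n))"
    by (intro continuous_map_sum continuous_map_integral_fst continuous_cutoff periodic_cutoff a(1)) auto
  then have "openin (weak_top T E) ?N" by (rule openin_continuous_map_preimage) auto
  moreover have "?N \<subseteq> ?S"
  proof
    fix q assume q: "q \<in> ?N"
    then have "q \<in> Mstar T E" by (simp add: topspace_weak_top)
    with q a show "q \<in> ?S" using time_abs_cont_fst_iff[OF T, of q E] by auto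
  qed
  ultimately show "\<exists>N. openin (weak_top T E) N \<and> p \<in> N \<and> N \<subseteq> ?S"
    using \<open>p \<in> ?S\<close> ne by (auto simp: topspace_weak_top)
qed

locale periodic_rates =
  fixes T0 :: real
    and r :: "'v::finite \<Rightarrow> 'v \<Rightarrow> real \<Rightarrow> real"
    and \<phi> :: "'v \<Rightarrow> real \<Rightarrow> real"
    and F :: "'v \<Rightarrow> 'v \<Rightarrow> real \<Rightarrow> real"
  assumes T0_pos: "T0 > 0"
    and r_nonneg: "\<And>y z t. r y z t \<ge> 0"
    and r_meas: "\<And>y z. r y z \<in> borel_measurable borel"
    and r_periodic: "\<And>y z. periodic_fun T0 (r y z)"
    and r_diag: "\<And>x t. r x x t = 0"
    and A1: "\<And>y z. (\<exists>t>0. r y z t > 0) \<Longrightarrow> (\<forall>t>0. r y z t > 0)"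
    and A3_upper: "\<exists>C. \<forall>(y, z)\<in>edges r. \<forall>t\<in>{0..T0}. r y z t \<le> C"
    and A4: "{t\<in>{0..<T0}. \<exists>y z. \<not> isCont (r y z) t} \<in> null_sets lborel"
    and phi_periodic: "\<And>y. periodic_fun T0 (\<phi> y)"
    and phi_C1: "\<And>y. \<exists>\<phi>'. (\<forall>t. (\<phi> y has_real_derivative \<phi>' t) (at t)) \<and> continuous_on UNIV \<phi>'"
    and F_periodic: "\<And>y z. (y, z) \<in> edges r \<Longrightarrow> periodic_fun T0 (F y z)"
    and F_cont: "\<And>y z. (y, z) \<in> edges r \<Longrightarrow> continuous_on UNIV (F y z)"
begin

lemma r_eq_0_off_edges:
  assumes "(y, z) \<notin> edges r" shows "r y z t = 0"
proof (cases "y = z")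
  case False
  have "r y z s = 0" if "s > 0" for s
    using assms False A1[of y z] r_nonneg[of y z s] that unfolding edges_def by force
  moreover obtain k :: int where "t + real_of_int k * T0 \<in> {0..<T0}"
    using ex_shift_into_period[OF T0_pos] .
  ultimately show ?thesis
    using periodic_fun_add_int[OF r_periodic, of y z t "k + 1"] T0_pos by (simp add: algebra_simps)
qed (simp add: r_diag)

lemma bounded_range_r: "bounded (range (r y z))"
proof (cases "(y, z) \<in> edges r")
  case True
  obtain C where "\<forall>(y, z)\<in>edges r. \<forall>t\<in>{0..T0}. r y z t \<le> C" using A3_upper by blast
  then have "\<forall>t\<in>{0..<T0}. \<bar>r y z t\<bar> \<le> C" using True r_nonneg by auto
  then show ?thesis
    unfolding periodic_fun_range[OF T0_pos r_periodic] bounded_iff by auto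
next
  case False
  then have "range (r y z) = {0}" using r_eq_0_off_edges by auto
  then show ?thesis by simp
qed

lemma phi_smooth:
  "continuous_on UNIV (\<phi> y)" "continuous_on UNIV (deriv (\<phi> y))" "periodic_fun T0 (deriv (\<phi> y))"
proof -
  obtain \<phi>' where d: "\<And>t. (\<phi> y has_real_derivative \<phi>' t) (at t)" and c: "continuous_on UNIV \<phi>'"
    using phi_C1[of y] by blast
  have de: "deriv (\<phi> y) = \<phi>'" using DERIV_imp_deriv[OF d] by auto
  show "continuous_on UNIV (\<phi> y)" using d by (intro continuous_at_imp_continuous_on ballI DERIV_continuous) auto
  show "continuous_on UNIV (deriv (\<phi> y))" using c de by simp
  have "\<phi>' (t + T0) = \<phi>' t" for t
  proof -
    have "(\<lambda>x. \<phi> y (x + T0)) = \<phi> y" using phi_periodic[of y] unfolding periodic_fun_def by auto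
    then have "(\<phi> y has_real_derivative \<phi>' (t + T0)) (at t)"
      using d[of "t + T0"] DERIV_shift by metis
    then show ?thesis using d[of t] DERIV_unique by blast
  qed
  then show "periodic_fun T0 (deriv (\<phi> y))" unfolding de periodic_fun_def by simp
qed

(* The summands of r^F(y) restricted to E, so that nothing is assumed about F off E, where r
   vanishes anyway. *)
definition tilted_rate :: "'v \<Rightarrow> 'v \<Rightarrow> real \<Rightarrow> real" where
  "tilted_rate y z t = (if (y, z) \<in> edges r then r y z t * exp (F y z t) else 0)"

definition rate_excess :: "'v \<Rightarrow> real \<Rightarrow> real" where
  "rate_excess y t = (\<Sum>z\<in>UNIV. r y z t * exp (F y z t)) - (\<Sum>z\<in>UNIV. r y z t)"

lemma rate_excess_eq: "rate_excess y = (\<lambda>t. (\<Sum>z\<in>UNIV. tilted_rate y z t) - (\<Sum>z\<in>UNIV. r y z t))"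
  unfolding rate_excess_def tilted_rate_def by (intro ext arg_cong2[where f = "(-)"] sum.cong refl)
    (auto simp: r_eq_0_off_edges)

lemma borel_measurable_tilted_rate: "tilted_rate y z \<in> borel_measurable borel"
proof (cases "(y, z) \<in> edges r")
  case True
  then have "F y z \<in> borel_measurable borel" by (intro borel_measurable_continuous_onI F_cont)
  then show ?thesis unfolding tilted_rate_def using True r_meas by simp
qed (simp add: tilted_rate_def[abs_def])

lemma periodic_tilted_rate: "tilted_rate y z (t + T0) = tilted_rate y z t"
  using r_periodic F_periodic unfolding tilted_rate_def periodic_fun_def by simp

lemma bounded_range_tilted_rate: "bounded (range (tilted_rate y z))"
proof (cases "(y, z) \<in> edges r")
  case True
  have "bounded (range (\<lambda>t. exp (F y z t)))"
  proof (rule bounded_range_continuous_periodic[OF T0_pos])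
    show "periodic_fun T0 (\<lambda>t. exp (F y z t))" using F_periodic[OF True] by (simp add: periodic_fun_def)
    show "continuous_on UNIV (\<lambda>t. exp (F y z t))" using F_cont[OF True] by (intro continuous_intros)
  qed
  then show ?thesis unfolding tilted_rate_def using True by (simp add: bounded_range_mult bounded_range_r)
qed (simp add: tilted_rate_def)

lemma isCont_tilted_rate: "isCont (r y z) t \<Longrightarrow> isCont (tilted_rate y z) t"
  unfolding tilted_rate_def using F_cont
  by (cases "(y, z) \<in> edges r") (auto intro!: continuous_intros simp: continuous_on_eq_continuous_at)

lemma borel_measurable_rate_excess: "rate_excess y \<in> borel_measurable borel"
  unfolding rate_excess_eq using r_meas borel_measurable_tilted_rate by measurable

lemma periodic_rate_excess: "periodic_fun T0 (rate_excess y)"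
  using r_periodic periodic_tilted_rate unfolding periodic_fun_def rate_excess_eq by simp

lemma bounded_range_rate_excess: "bounded (range (rate_excess y))"
  unfolding rate_excess_eq
  by (intro bounded_minus_comp bounded_range_sum bounded_range_r bounded_range_tilted_rate) auto

lemma AE_isCont_rate_excess: "AE t in lborel. t \<in> {0..<T0} \<longrightarrow> isCont (rate_excess y) t"
proof (rule AE_I'[OF A4])
  have "isCont (rate_excess y) t" if "\<And>y z. isCont (r y z) t" for t
    unfolding rate_excess_eq using that isCont_tilted_rate by (intro continuous_intros) auto
  then show "{t \<in> space lborel. \<not> (t \<in> {0..<T0} \<longrightarrow> isCont (rate_excess y) t)}
      \<subseteq> {t \<in> {0..<T0}. \<exists>y z. \<not> isCont (r y z) t}"
    by blast
qed

definition Ilin :: "('v \<Rightarrow> real measure) \<Rightarrow> ('v \<times> 'v \<Rightarrow> real measure) \<Rightarrow> real" where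
  "Ilin \<mu> Q = - (\<Sum>y\<in>UNIV. \<integral>t. deriv (\<phi> y) t \<partial>(\<mu> y))
     + (\<Sum>y\<in>UNIV. \<Sum>z\<in>UNIV. (\<integral>s. \<phi> y s \<partial>(Q (y, z))) - (\<integral>s. \<phi> y s \<partial>(Q (z, y))))
     + (\<Sum>(y, z)\<in>edges r. \<integral>t. F y z t \<partial>(Q (y, z)))"

definition Irate :: "('v \<Rightarrow> real measure) \<Rightarrow> real" where
  "Irate \<mu> = (\<Sum>y\<in>UNIV. \<integral>t. rate_excess y t \<partial>(\<mu> y))"

lemma Ihat_eq: "Ihat T0 r \<phi> F \<mu> Q = Ilin \<mu> Q - Irate \<mu>"
  unfolding Ihat_def Ilin_def Irate_def rate_excess_def by simp

lemma affine_Ilin_Irate: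
  assumes p: "p \<in> Mstar T0 (edges r)" and q: "q \<in> Mstar T0 (edges r)"
    and cc: "convex_comb_pair lam p q w" and lam: "0 \<le> lam" "lam \<le> 1"
  shows "Ilin (fst w) (snd w) = lam * Ilin (fst p) (snd p) + (1 - lam) * Ilin (fst q) (snd q)"
    and "Irate (fst w) = lam * Irate (fst p) + (1 - lam) * Irate (fst q)"
proof -
  have fst_w: "integral\<^sup>L (fst w y) f = lam * integral\<^sup>L (fst p y) f + (1 - lam) * integral\<^sup>L (fst q y) f"
    if "f \<in> borel_measurable borel" "bounded (range f)" for y f
    by (rule integral_convex_comb_meas[OF convex_comb_pairD(1)[OF cc] lam MstarD(1)[OF p] MstarD(1)[OF q] that])
  have snd_w: "integral\<^sup>L (snd w e) f = lam * integral\<^sup>L (snd p e) f + (1 - lam) * integral\<^sup>L (snd q e) f"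
    if "continuous_on UNIV f" "periodic_fun T0 f" for e f
    using that by (intro integral_convex_comb_meas[OF convex_comb_pairD(2)[OF cc] lam MstarD(2)[OF p] MstarD(2)[OF q]]
      borel_measurable_continuous_onI bounded_range_continuous_periodic[OF T0_pos])
  show "Irate (fst w) = lam * Irate (fst p) + (1 - lam) * Irate (fst q)"
    unfolding Irate_def
    by (intro sum_convex_comb fst_w borel_measurable_rate_excess bounded_range_rate_excess)
  have "deriv (\<phi> y) \<in> borel_measurable borel" "bounded (range (deriv (\<phi> y)))" for y
    using phi_smooth by (auto intro: borel_measurable_continuous_onI bounded_range_continuous_periodic[OF T0_pos])
  then have "(\<Sum>y\<in>UNIV. \<integral>t. deriv (\<phi> y) t \<partial>(fst w y))
      = lam * (\<Sum>y\<in>UNIV. \<integral>t. deriv (\<phi> y) t \<partial>(fst p y)) + (1 - lam) * (\<Sum>y\<in>UNIV. \<integral>t. deriv (\<phi> y) t \<partial>(fst q y))"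
    by (intro sum_convex_comb fst_w)
  moreover have "(\<Sum>y\<in>UNIV. \<Sum>z\<in>UNIV. (\<integral>s. \<phi> y s \<partial>(snd w (y, z))) - (\<integral>s. \<phi> y s \<partial>(snd w (z, y))))
      = lam * (\<Sum>y\<in>UNIV. \<Sum>z\<in>UNIV. (\<integral>s. \<phi> y s \<partial>(snd p (y, z))) - (\<integral>s. \<phi> y s \<partial>(snd p (z, y))))
        + (1 - lam) * (\<Sum>y\<in>UNIV. \<Sum>z\<in>UNIV. (\<integral>s. \<phi> y s \<partial>(snd q (y, z))) - (\<integral>s. \<phi> y s \<partial>(snd q (z, y))))"
    by (intro sum_convex_comb) (simp add: snd_w[OF phi_smooth(1) phi_periodic] algebra_simps)
  moreover have "(\<Sum>(y, z)\<in>edges r. \<integral>t. F y z t \<partial>(snd w (y, z)))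
      = lam * (\<Sum>(y, z)\<in>edges r. \<integral>t. F y z t \<partial>(snd p (y, z)))
        + (1 - lam) * (\<Sum>(y, z)\<in>edges r. \<integral>t. F y z t \<partial>(snd q (y, z)))"
    by (intro sum_convex_comb) (auto simp: snd_w[OF F_cont F_periodic])
  ultimately show "Ilin (fst w) (snd w) = lam * Ilin (fst p) (snd p) + (1 - lam) * Ilin (fst q) (snd q)"
    unfolding Ilin_def by (simp add: algebra_simps)
qed

lemma continuous_map_Ilin: "continuous_map (weak_top T0 (edges r)) euclideanreal (\<lambda>p. Ilin (fst p) (snd p))"
  unfolding Ilin_def case_prod_beta
  by (intro continuous_map_add continuous_map_minus continuous_map_diff continuous_map_sum
      continuous_map_integral_fst continuous_map_integral_snd phi_smooth phi_periodic)
    (auto intro: F_cont F_periodic)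

lemma integral_majorant_diff_le:
  assumes p: "p \<in> Mstar T0 (edges r)" "time_abs_cont T0 (fst p)"
    and h: "h \<in> borel_measurable borel" "bounded (range h)" "\<And>t. rate_excess y t \<le> h t"
  shows "(\<integral>t. h t \<partial>(fst p y)) - (\<integral>t. rate_excess y t \<partial>(fst p y))
    \<le> integral\<^sup>L (lborel_period T0) (\<lambda>t. h t - rate_excess y t)"
proof -
  note c = MstarD(1)[OF p(1)]
  have "(\<integral>t. h t \<partial>(fst p y)) - (\<integral>t. rate_excess y t \<partial>(fst p y)) = (\<integral>t. h t - rate_excess y t \<partial>(fst p y))"
    by (rule Bochner_Integration.integral_diff[symmetric, OF integrable_circ_meas[OF c h(1,2)]
          integrable_circ_meas[OF c borel_measurable_rate_excess bounded_range_rate_excess]])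
  also have "\<dots> \<le> integral\<^sup>L (lborel_period T0) (\<lambda>t. h t - rate_excess y t)"
  proof (rule integral_le_lborel_period[where \<mu> = "fst p", OF T0_pos c p(2)])
    show "(\<lambda>t. h t - rate_excess y t) \<in> borel_measurable borel"
      by (intro borel_measurable_diff h(1) borel_measurable_rate_excess)
    show "bounded (range (\<lambda>t. h t - rate_excess y t))"
      by (rule bounded_minus_comp[OF h(2) bounded_range_rate_excess])
    show "0 \<le> h t - rate_excess y t" for t using h(3)[of t] by simp
  qed
  finally show ?thesis .
qed

lemma ex_continuous_majorant_Irate:
  assumes p: "p \<in> Mstar T0 (edges r)" "time_abs_cont T0 (fst p)" and \<epsilon>: "\<epsilon> > 0"
  obtains h where "\<And>y. continuous_on UNIV (h y)" "\<And>y. periodic_fun T0 (h y)"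
    "\<And>q. q \<in> Mstar T0 (edges r) \<Longrightarrow> Irate (fst q) \<le> (\<Sum>y\<in>UNIV. \<integral>t. h y t \<partial>(fst q y))"
    "(\<Sum>y\<in>UNIV. \<integral>t. h y t \<partial>(fst p y)) < Irate (fst p) + \<epsilon>"
proof -
  define \<delta> where "\<delta> = \<epsilon> / real CARD('v)"
  have \<delta>: "\<delta> > 0" using \<epsilon> by (simp add: \<delta>_def)
  have "\<forall>y. \<exists>h. continuous_on UNIV h \<and> periodic_fun T0 h \<and> (\<forall>t. rate_excess y t \<le> h t) \<and> bounded (range h)
      \<and> integral\<^sup>L (lborel_period T0) (\<lambda>t. h t - rate_excess y t) < \<delta>"
  proof
    fix y
    obtain G where G: "\<And>t. \<bar>rate_excess y t\<bar> \<le> G"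
      using bounded_range_rate_excess[of y] unfolding bounded_iff by auto
    show "\<exists>h. continuous_on UNIV h \<and> periodic_fun T0 h \<and> (\<forall>t. rate_excess y t \<le> h t)
      \<and> bounded (range h) \<and> integral\<^sup>L (lborel_period T0) (\<lambda>t. h t - rate_excess y t) < \<delta>"
    proof (rule ex_continuous_majorant[where g = "rate_excess y", OF G T0_pos borel_measurable_rate_excess
          periodic_rate_excess AE_isCont_rate_excess \<delta>])
      fix h assume h: "continuous_on UNIV h" "periodic_fun T0 h" "\<And>t. rate_excess y t \<le> h t"
        "\<And>t. \<bar>h t\<bar> \<le> G" "integral\<^sup>L (lborel_period T0) (\<lambda>t. h t - rate_excess y t) < \<delta>"
      moreover have "bounded (range h)" unfolding bounded_iff using h(4) by auto
      ultimately show ?thesis by blast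
    qed
  qed
  then obtain h where "\<forall>y. continuous_on UNIV (h y) \<and> periodic_fun T0 (h y) \<and> (\<forall>t. rate_excess y t \<le> h y t)
      \<and> bounded (range (h y)) \<and> integral\<^sup>L (lborel_period T0) (\<lambda>t. h y t - rate_excess y t) < \<delta>"
    by (auto dest: choice)
  then have h: "\<And>y. continuous_on UNIV (h y)" "\<And>y. periodic_fun T0 (h y)"
      "\<And>y t. rate_excess y t \<le> h y t" "\<And>y. bounded (range (h y))"
      "\<And>y. integral\<^sup>L (lborel_period T0) (\<lambda>t. h y t - rate_excess y t) < \<delta>"
    by auto
  have h_meas: "h y \<in> borel_measurable borel" for y by (rule borel_measurable_continuous_onI[OF h(1)])
  show ?thesis
  proof (rule that[OF h(1,2)])
    fix q assume "q \<in> Mstar T0 (edges r)"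
    note integrable = integrable_circ_meas[OF MstarD(1)[OF this]]
    show "Irate (fst q) \<le> (\<Sum>y\<in>UNIV. \<integral>t. h y t \<partial>(fst q y))"
      unfolding Irate_def
      by (intro sum_mono integral_mono integrable h h_meas borel_measurable_rate_excess
          bounded_range_rate_excess)
  next
    have "(\<Sum>y\<in>UNIV. (\<integral>t. h y t \<partial>(fst p y)) - (\<integral>t. rate_excess y t \<partial>(fst p y)))
        < (\<Sum>y\<in>(UNIV :: 'v set). \<delta>)"
      using integral_majorant_diff_le[OF p h_meas h(4,3)] h(5) by (intro sum_strict_mono) (auto intro: le_less_trans)
    then show "(\<Sum>y\<in>UNIV. \<integral>t. h y t \<partial>(fst p y)) < Irate (fst p) + \<epsilon>"
      unfolding Irate_def sum_subtractf \<delta>_def by simp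
  qed
qed

lemma convex_Ifun:
  assumes p: "p \<in> Mstar T0 (edges r)" and q: "q \<in> Mstar T0 (edges r)"
    and lam: "lam \<in> {0<..<1}" and cc: "convex_comb_pair lam p q w"
  shows "Ifun T0 r \<phi> F w \<le> ereal lam * Ifun T0 r \<phi> F p + ereal (1 - lam) * Ifun T0 r \<phi> F q"
proof -
  have lam: "0 \<le> lam" "lam \<le> 1" using lam by auto
  show ?thesis
  proof (cases "time_abs_cont T0 (fst p) \<and> time_abs_cont T0 (fst q)")
    case True
    have "time_abs_cont T0 (fst w)"
      by (rule time_abs_cont_convex_comb[where \<mu> = "fst p" and \<nu> = "fst q" and \<rho> = "fst w",
            OF convex_comb_pairD(1)[OF cc] lam MstarD(1)[OF p] MstarD(1)[OF q]]) (use True in auto)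
    moreover have "Ihat T0 r \<phi> F (fst w) (snd w)
        = lam * Ihat T0 r \<phi> F (fst p) (snd p) + (1 - lam) * Ihat T0 r \<phi> F (fst q) (snd q)"
      unfolding Ihat_eq affine_Ilin_Irate[OF p q cc lam] by (simp add: algebra_simps)
    ultimately show ?thesis using True unfolding Ifun_def by simp
  next
    case False
    then have "Ifun T0 r \<phi> F p = \<infinity> \<or> Ifun T0 r \<phi> F q = \<infinity>" unfolding Ifun_def by auto
    moreover have "Ifun T0 r \<phi> F p \<noteq> - \<infinity>" "Ifun T0 r \<phi> F q \<noteq> - \<infinity>" unfolding Ifun_def by auto
    ultimately have infinite: "ereal lam * Ifun T0 r \<phi> F p + ereal (1 - lam) * Ifun T0 r \<phi> F q = \<infinity>"
      using \<open>lam \<in> {0<..<1}\<close>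
      by (cases "Ifun T0 r \<phi> F p"; cases "Ifun T0 r \<phi> F q") auto
    show ?thesis unfolding infinite by simp
  qed
qed

lemma openin_Ifun_superlevel:
  "openin (weak_top T0 (edges r)) {p \<in> Mstar T0 (edges r). ereal c < Ifun T0 r \<phi> F p}" (is "openin ?W ?O")
  unfolding openin_subopen[of ?W ?O]
proof
  fix p assume "p \<in> ?O"
  then have p: "p \<in> Mstar T0 (edges r)" and c: "ereal c < Ifun T0 r \<phi> F p" by auto
  show "\<exists>N. openin ?W N \<and> p \<in> N \<and> N \<subseteq> ?O"
  proof (cases "time_abs_cont T0 (fst p)")
    case False
    have "{q \<in> Mstar T0 (edges r). \<not> time_abs_cont T0 (fst q)} \<subseteq> ?O" by (auto simp: Ifun_def)
    then show ?thesis using openin_not_time_abs_cont[OF T0_pos] p False by blast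
  next
    case True
    define \<epsilon> where "\<epsilon> = Ihat T0 r \<phi> F (fst p) (snd p) - c"
    have "\<epsilon> > 0" using c True unfolding \<epsilon>_def Ifun_def by simp
    then obtain h where h: "\<And>y. continuous_on UNIV (h y)" "\<And>y. periodic_fun T0 (h y)"
        "\<And>q. q \<in> Mstar T0 (edges r) \<Longrightarrow> Irate (fst q) \<le> (\<Sum>y\<in>UNIV. \<integral>t. h y t \<partial>(fst q y))"
        "(\<Sum>y\<in>UNIV. \<integral>t. h y t \<partial>(fst p y)) < Irate (fst p) + \<epsilon>"
      using ex_continuous_majorant_Irate[OF p True] by blast
    \<comment> \<open>\<open>\<Psi>\<close> is weakly continuous, bounds \<open>Ihat\<close> from below on all of \<open>Mstar\<close>
      because the \<open>h y\<close> majorize the rate integrands, and exceeds \<open>c\<close> at \<open>p\<close>.\<close>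
    define \<Psi> where "\<Psi> q = Ilin (fst q) (snd q) - (\<Sum>y\<in>UNIV. \<integral>t. h y t \<partial>(fst q y))" for q
    have "continuous_map ?W euclideanreal \<Psi>"
      unfolding \<Psi>_def
      by (intro continuous_map_diff continuous_map_Ilin continuous_map_sum continuous_map_integral_fst h) auto
    then have "openin ?W {q \<in> topspace ?W. \<Psi> q \<in> {c<..}}"
      by (rule openin_continuous_map_preimage) auto
    moreover have "c < \<Psi> p"
      using h(4) unfolding \<Psi>_def \<epsilon>_def Ihat_eq by simp
    moreover have "c < Ifun T0 r \<phi> F q" if "q \<in> Mstar T0 (edges r)" "c < \<Psi> q" for q
      using h(3)[OF that(1)] that(2) unfolding \<Psi>_def by (simp add: Ifun_def Ihat_eq)
    ultimately show ?thesis
      using p unfolding topspace_weak_top by (intro exI[of _ "{q \<in> Mstar T0 (edges r). \<Psi> q \<in> {c<..}}"]) auto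
  qed
qed

end

theorem lemma8p2:
  fixes T0 :: real
    and r :: "'v::finite \<Rightarrow> 'v \<Rightarrow> real \<Rightarrow> real"
    and \<phi> :: "'v \<Rightarrow> real \<Rightarrow> real"
    and F :: "'v \<Rightarrow> 'v \<Rightarrow> real \<Rightarrow> real"
  assumes T0_pos: "T0 > 0"
    and r_nonneg: "\<And>y z t. r y z t \<ge> 0"
    and r_meas: "\<And>y z. r y z \<in> borel_measurable borel"
    and r_periodic: "\<And>y z. periodic_fun T0 (r y z)"
    and r_diag: "\<And>x t. r x x t = 0"
    and A1: "\<And>y z. (\<exists>t>0. r y z t > 0) \<Longrightarrow> (\<forall>t>0. r y z t > 0)"
    and A2: "\<And>y z. (y, z) \<in> (edges r)\<^sup>*"
    and A3_upper: "\<exists>C. \<forall>(y, z)\<in>edges r. \<forall>t\<in>{0..T0}. r y z t \<le> C"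
    and A3_lower: "\<exists>c>0. \<forall>(y, z)\<in>edges r. \<forall>t\<in>{0..T0}. c \<le> r y z t"
    and A4: "{t\<in>{0..<T0}. \<exists>y z. \<not> isCont (r y z) t} \<in> null_sets lborel"
    and phi_periodic: "\<And>y. periodic_fun T0 (\<phi> y)"
    and phi_C1: "\<And>y. \<exists>\<phi>'. (\<forall>t. (\<phi> y has_real_derivative \<phi>' t) (at t)) \<and> continuous_on UNIV \<phi>'"
    and F_periodic: "\<And>y z. (y, z) \<in> edges r \<Longrightarrow> periodic_fun T0 (F y z)"
    and F_cont: "\<And>y z. (y, z) \<in> edges r \<Longrightarrow> continuous_on UNIV (F y z)"
  shows "(\<forall>p\<in>Mstar T0 (edges r). \<forall>q\<in>Mstar T0 (edges r). \<forall>w\<in>Mstar T0 (edges r).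
            \<forall>lam\<in>{0<..<1::real}. convex_comb_pair lam p q w \<longrightarrow>
              Ifun T0 r \<phi> F w \<le> ereal lam * Ifun T0 r \<phi> F p + ereal (1 - lam) * Ifun T0 r \<phi> F q)
       \<and> (\<forall>c::real. openin (weak_top T0 (edges r)) {p\<in>Mstar T0 (edges r). ereal c < Ifun T0 r \<phi> F p})"
proof -
  interpret periodic_rates T0 r \<phi> F
    by unfold_locales (fact T0_pos r_nonneg r_meas r_periodic r_diag A1 A3_upper A4 phi_periodic phi_C1
        F_periodic F_cont)+
  show ?thesis by (intro conjI ballI allI impI convex_Ifun openin_Ifun_superlevel)
qed

end
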